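(* For any $c_1<0$ and $c_2>0$, there exist connected graphs $G_1,G_2$ and non-cut edges $e_1$ of $G_1$ and $e_2$ of $G_2$ such that $z_c(G_1;e_1)<c_1$ and $z_c(G_2;e_2)>c_2$.
   Context: Zero forcing: given a graph $G$ and a set $S$ of initially colored vertices, if a colored vertex $u$ has exactly one uncolored neighbor $v$, then $v$ becomes colored. $S$ is a zero forcing set if repeated application colors all vertices. A connected forcing set is a zero forcing set $S$ with $G[S]$ connected; $Z_c(G)$ is the minimum size of a connected forcing set of a connected graph $G$. For a connected graph $G$ and an edge $e$ of $G$ that is not a cut edge, the connected forcing spread of $e$ is $z_c(G;e)=Z_c(G)-Z_c(G-e)$. *)

theory Defs
  imports Complex_Main
begin

definition simple_graph :: "'a set \<Rightarrow> 'a set set \<Rightarrow> bool" where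
  "simple_graph V E \<longleftrightarrow> finite V \<and> (\<forall>e\<in>E. e \<subseteq> V \<and> card e = 2)"

definition connected_on :: "'a set set \<Rightarrow> 'a set \<Rightarrow> bool" where
  "connected_on E S \<longleftrightarrow>
     (\<forall>u\<in>S. \<forall>v\<in>S. (\<lambda>x y. x \<in> S \<and> y \<in> S \<and> {x, y} \<in> E)\<^sup>*\<^sup>* u v)"

definition connected_graph :: "'a set \<Rightarrow> 'a set set \<Rightarrow> bool" where
  "connected_graph V E \<longleftrightarrow> simple_graph V E \<and> V \<noteq> {} \<and> connected_on E V"

inductive_set zf_closure :: "'a set \<Rightarrow> 'a set set \<Rightarrow> 'a set \<Rightarrow> 'a set"
  for V :: "'a set" and E :: "'a set set" and S :: "'a set" where
  init: "v \<in> S \<Longrightarrow> v \<in> zf_closure V E S"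
| force: "\<lbrakk>u \<in> zf_closure V E S; u \<in> V; v \<in> V; {u, v} \<in> E;
           \<forall>w\<in>V. {u, w} \<in> E \<and> w \<noteq> v \<longrightarrow> w \<in> zf_closure V E S\<rbrakk>
          \<Longrightarrow> v \<in> zf_closure V E S"

definition zero_forcing_set :: "'a set \<Rightarrow> 'a set set \<Rightarrow> 'a set \<Rightarrow> bool" where
  "zero_forcing_set V E S \<longleftrightarrow> S \<subseteq> V \<and> zf_closure V E S = V"

definition connected_forcing_set :: "'a set \<Rightarrow> 'a set set \<Rightarrow> 'a set \<Rightarrow> bool" where
  "connected_forcing_set V E S \<longleftrightarrow> zero_forcing_set V E S \<and> connected_on E S"

definition Zc :: "'a set \<Rightarrow> 'a set set \<Rightarrow> nat" where
  "Zc V E = (LEAST n. \<exists>S. connected_forcing_set V E S \<and> card S = n)"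

definition non_cut_edge :: "'a set \<Rightarrow> 'a set set \<Rightarrow> 'a set \<Rightarrow> bool" where
  "non_cut_edge V E e \<longleftrightarrow> e \<in> E \<and> connected_graph V (E - {e})"

definition zc_spread :: "'a set \<Rightarrow> 'a set set \<Rightarrow> 'a set \<Rightarrow> int" where
  "zc_spread V E e = int (Zc V E) - int (Zc V (E - {e}))"

end

theory Submission
  imports Defs
begin

text \<open>Let the spine be the path \<open>0, 1, \<dots>, L\<close>, hang two leaves \<open>L+3, L+4\<close> at \<open>L\<close> and the path
  \<open>0, L+1, L+2\<close> at \<open>0\<close>. In this tree the connected set \<open>{L, L+3, L+4}\<close> forces down the spine and
  up the pendant path, so \<open>Z\<^sub>c \<le> 3\<close>. Closing the triangle \<open>{0, L+1, L+2}\<close> turns both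
  \<open>{L+1, L+2}\<close> and \<open>{L+3, L+4}\<close> into forts: no outside vertex has exactly one neighbour in them,
  so every forcing set meets both, and a connected one then contains the whole spine, giving
  \<open>Z\<^sub>c \<ge> L + 3\<close>. Adding the edge \<open>{L+2, L+3}\<close> as well lets \<open>{L, L+3, L+4}\<close> force again, now via
  \<open>L+3 \<rightarrow> L+2 \<rightarrow> L+1\<close>, so \<open>Z\<^sub>c \<le> 3\<close>. Hence the triangle edge has spread at least \<open>L\<close> and the
  edge \<open>{L+2, L+3}\<close> has spread at most \<open>-L\<close>.\<close>

lemma zf_closure_subset: "zf_closure V E S \<subseteq> V \<union> S"
proof
  fix x assume "x \<in> zf_closure V E S" then show "x \<in> V \<union> S"
    by (induction rule: zf_closure.induct) auto
qed

lemma zf_closure_force_edge: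
  assumes "simple_graph V E" "u \<in> zf_closure V E S" "{u, v} \<in> E"
    and "\<And>w. {u, w} \<in> E \<Longrightarrow> w \<noteq> v \<Longrightarrow> w \<in> zf_closure V E S"
  shows "v \<in> zf_closure V E S"
proof (rule zf_closure.force)
  have "{u, v} \<subseteq> V" using assms(1,3) unfolding simple_graph_def by blast
  then show "u \<in> V" "v \<in> V" by auto
qed (use assms in auto)

lemma zf_closure_path_downward:
  assumes G: "simple_graph V E"
    and path: "\<And>i. i < n \<Longrightarrow> {i, Suc i} \<in> E"
    and inner: "\<And>i w. 0 < i \<Longrightarrow> i < n \<Longrightarrow> {i, w} \<in> E \<Longrightarrow> w = i - 1 \<or> w = Suc i"
    and top: "n \<in> zf_closure V E S"
    and top_nbrs: "\<And>w. {n, w} \<in> E \<Longrightarrow> w \<noteq> n - 1 \<Longrightarrow> w \<in> zf_closure V E S"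
    and "i \<le> n"
  shows "i \<in> zf_closure V E S"
proof -
  let ?C = "zf_closure V E S"
  have "\<forall>k. m \<le> k \<longrightarrow> k \<le> n \<longrightarrow> k \<in> ?C" if "m \<le> n" for m
    using that
  proof (induction m rule: inc_induct)
    case base then show ?case using top by auto
  next
    case (step m)
    have "m \<in> ?C"
    proof (rule zf_closure_force_edge[OF G, of "Suc m"])
      show "Suc m \<in> ?C" using step by auto
      show "{Suc m, m} \<in> E" using path[OF step.hyps(2)] by (simp add: insert_commute)
      fix w assume w: "{Suc m, w} \<in> E" "w \<noteq> m"
      show "w \<in> ?C"
      proof (cases "Suc m = n")
        case True then show ?thesis using top_nbrs w by auto
      next
        case False
        then have "w = Suc (Suc m)" using inner[OF _ _ w(1)] w(2) step.hyps by auto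
        then show ?thesis using step False by auto
      qed
    qed
    then show ?case using step.IH by (metis le_antisym not_less_eq_eq)
  qed
  then show ?thesis using assms(6) by blast
qed

definition fort :: "'a set \<Rightarrow> 'a set set \<Rightarrow> 'a set \<Rightarrow> bool" where
  "fort V E F \<longleftrightarrow> F \<subseteq> V \<and> F \<noteq> {} \<and>
     (\<forall>w\<in>V - F. \<forall>v\<in>F. {w, v} \<in> E \<longrightarrow> (\<exists>v'\<in>F. v' \<noteq> v \<and> {w, v'} \<in> E))"

lemma zf_closure_disjoint_fort:
  assumes "fort V E F" "S \<inter> F = {}"
  shows "zf_closure V E S \<inter> F = {}"
proof -
  have "x \<notin> F" if "x \<in> zf_closure V E S" for x
    using that
  proof (induction rule: zf_closure.induct)
    case (init v) then show ?case using assms(2) by auto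
  next
    case (force u v)
    show ?case
    proof
      assume "v \<in> F"
      then obtain v' where "v' \<in> F" "v' \<noteq> v" "{u, v'} \<in> E"
        using assms(1) force unfolding fort_def by blast
      moreover have "v' \<in> V" using assms(1) \<open>v' \<in> F\<close> unfolding fort_def by auto
      ultimately show False using force by blast
    qed
  qed
  then show ?thesis by blast
qed

lemma zero_forcing_set_meets_fort:
  assumes "fort V E F" "zero_forcing_set V E S"
  shows "S \<inter> F \<noteq> {}"
proof
  assume "S \<inter> F = {}"
  then have "zf_closure V E S \<inter> F = {}" by (rule zf_closure_disjoint_fort[OF assms(1)])
  then show False using assms unfolding fort_def zero_forcing_set_def by auto
qed

lemma connected_onI:
  assumes "r \<in> S" "\<And>v. v \<in> S \<Longrightarrow> (\<lambda>x y. x \<in> S \<and> y \<in> S \<and> {x, y} \<in> E)\<^sup>*\<^sup>* v r"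
  shows "connected_on E S"
proof -
  let ?R = "\<lambda>x y. x \<in> S \<and> y \<in> S \<and> {x, y} \<in> E"
  have "symp ?R" by (rule sympI) (simp add: insert_commute)
  then have "symp ?R\<^sup>*\<^sup>*" by (rule symp_rtranclp)
  show ?thesis unfolding connected_on_def
  proof (intro ballI)
    fix u v assume "u \<in> S" "v \<in> S"
    have "?R\<^sup>*\<^sup>* u r" using assms(2)[OF \<open>u \<in> S\<close>] .
    moreover have "?R\<^sup>*\<^sup>* r v" using sympD[OF \<open>symp ?R\<^sup>*\<^sup>*\<close> assms(2)[OF \<open>v \<in> S\<close>]] .
    ultimately show "?R\<^sup>*\<^sup>* u v" by (rule rtranclp_trans)
  qed
qed

lemma connected_on_mono:
  assumes "connected_on E S" "E \<subseteq> E'"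
  shows "connected_on E' S"
proof -
  have "(\<lambda>x y. x \<in> S \<and> y \<in> S \<and> {x, y} \<in> E) \<le> (\<lambda>x y. x \<in> S \<and> y \<in> S \<and> {x, y} \<in> E')"
    using assms(2) by auto
  then have "(\<lambda>x y. x \<in> S \<and> y \<in> S \<and> {x, y} \<in> E)\<^sup>*\<^sup>* \<le> (\<lambda>x y. x \<in> S \<and> y \<in> S \<and> {x, y} \<in> E')\<^sup>*\<^sup>*"
    by (rule rtranclp_mono)
  then show ?thesis using assms(1) unfolding connected_on_def by blast
qed

lemma connected_on_contains_gateway:
  assumes "connected_on E S" "x \<in> S" "y \<in> S" "x \<in> X" "y \<notin> X" "p \<notin> X"
    and gateway: "\<And>s t. {s, t} \<in> E \<Longrightarrow> s \<in> X \<Longrightarrow> t \<notin> X \<Longrightarrow> t = p"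
  shows "p \<in> S"
proof (rule ccontr)
  assume "p \<notin> S"
  let ?R = "\<lambda>x y. x \<in> S \<and> y \<in> S \<and> {x, y} \<in> E"
  have "z \<in> X" if "?R\<^sup>*\<^sup>* x z" for z
    using that
  proof (induction rule: rtranclp_induct)
    case base then show ?case using assms(4) .
  next
    case (step z w) then show ?case using gateway \<open>p \<notin> S\<close> by blast
  qed
  moreover have "?R\<^sup>*\<^sup>* x y" using assms(1-3) unfolding connected_on_def by blast
  ultimately show False using assms(5) by blast
qed

lemma Zc_le_card: "connected_forcing_set V E S \<Longrightarrow> Zc V E \<le> card S"
  unfolding Zc_def by (rule Least_le) blast

lemma Zc_le_card_of_forcing:
  assumes "connected_on E S" "S \<subseteq> V" "V \<subseteq> zf_closure V E S"
  shows "Zc V E \<le> card S"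
proof (rule Zc_le_card)
  have "zf_closure V E S = V" using zf_closure_subset[of V E S] assms(2,3) by blast
  then show "connected_forcing_set V E S"
    unfolding connected_forcing_set_def zero_forcing_set_def using assms(1,2) by simp
qed

lemma Zc_attained:
  assumes "connected_on E V"
  obtains S where "connected_forcing_set V E S" "card S = Zc V E"
proof -
  have "zf_closure V E V = V"
    using zf_closure_subset[of V E V] by (auto intro: zf_closure.init)
  then have "connected_forcing_set V E V"
    unfolding connected_forcing_set_def zero_forcing_set_def using assms by simp
  then have "\<exists>n S. connected_forcing_set V E S \<and> card S = n" by blast
  then have "\<exists>S. connected_forcing_set V E S \<and> card S = Zc V E"
    unfolding Zc_def by (rule LeastI_ex)
  then show thesis using that by blast
qed

lemma path_edge_iff:
  "{u, w} \<in> {{i, Suc i} | i. i < n} \<longleftrightarrow> (u < n \<and> w = Suc u) \<or> (w < n \<and> u = Suc w)"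
  by (auto simp: doubleton_eq_iff)

definition broom_vertices :: "nat \<Rightarrow> nat set" where
  "broom_vertices L = {0..L+4}"

definition broom_tree :: "nat \<Rightarrow> nat set set" where
  "broom_tree L = {{i, Suc i} | i. i < L} \<union> {{0, L+1}, {L+1, L+2}, {L, L+3}, {L, L+4}}"

definition broom_triangle :: "nat \<Rightarrow> nat set set" where
  "broom_triangle L = insert {0, L+2} (broom_tree L)"

definition broom_cycle :: "nat \<Rightarrow> nat set set" where
  "broom_cycle L = insert {L+2, L+3} (broom_triangle L)"

lemma broom_vertices_cases:
  "v \<in> broom_vertices L \<Longrightarrow> v \<le> L \<or> v = L+1 \<or> v = L+2 \<or> v = L+3 \<or> v = L+4"
  by (auto simp: broom_vertices_def)

lemma broom_tree_edge:
  "{u, w} \<in> broom_tree L \<longleftrightarrow> (u < L \<and> w = Suc u) \<or> (w < L \<and> u = Suc w) \<or>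
     (u = 0 \<and> w = L+1) \<or> (u = L+1 \<and> w = 0) \<or> (u = L+1 \<and> w = L+2) \<or> (u = L+2 \<and> w = L+1) \<or>
     (u = L \<and> w = L+3) \<or> (u = L+3 \<and> w = L) \<or> (u = L \<and> w = L+4) \<or> (u = L+4 \<and> w = L)"
  unfolding broom_tree_def Un_iff path_edge_iff
  by (simp add: doubleton_eq_iff conj_disj_distribR disj_commute disj_left_commute)

lemma broom_triangle_edge:
  "{u, w} \<in> broom_triangle L \<longleftrightarrow>
     {u, w} \<in> broom_tree L \<or> (u = 0 \<and> w = L+2) \<or> (u = L+2 \<and> w = 0)"
  unfolding broom_triangle_def by (auto simp: doubleton_eq_iff)

lemma broom_cycle_edge:
  "{u, w} \<in> broom_cycle L \<longleftrightarrow>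
     {u, w} \<in> broom_triangle L \<or> (u = L+3 \<and> w = L+2) \<or> (u = L+2 \<and> w = L+3)"
  unfolding broom_cycle_def by (auto simp: doubleton_eq_iff)

lemmas broom_edge_iffs = broom_cycle_edge broom_triangle_edge broom_tree_edge

lemma broom_subsets:
  "broom_tree L \<subseteq> broom_triangle L" "broom_triangle L \<subseteq> broom_cycle L" "broom_tree L \<subseteq> broom_cycle L"
  unfolding broom_cycle_def broom_triangle_def by auto

lemma simple_graph_broom_cycle_subset:
  assumes "E \<subseteq> broom_cycle L"
  shows "simple_graph (broom_vertices L) E"
  unfolding simple_graph_def
proof (intro conjI ballI)
  show "finite (broom_vertices L)" by (simp add: broom_vertices_def)
  fix e assume "e \<in> E"
  then obtain u w where e: "e = {u, w}" "u \<noteq> w" "u \<le> L+4" "w \<le> L+4"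
    using assms unfolding broom_cycle_def broom_triangle_def broom_tree_def by auto
  then show "e \<subseteq> broom_vertices L" by (auto simp: broom_vertices_def)
  show "card e = 2" using e by simp
qed

lemma connected_graph_broom:
  assumes "broom_tree L \<subseteq> E" "E \<subseteq> broom_cycle L"
  shows "connected_graph (broom_vertices L) E"
proof -
  let ?V = "broom_vertices L"
  let ?R = "\<lambda>x y. x \<in> ?V \<and> y \<in> ?V \<and> {x, y} \<in> broom_tree L"
  have spine: "?R\<^sup>*\<^sup>* i 0" if "i \<le> L" for i
    using that
  proof (induction i)
    case 0 then show ?case by simp
  next
    case (Suc i)
    then have "?R (Suc i) i" by (simp add: broom_vertices_def broom_tree_edge)
    moreover have "?R\<^sup>*\<^sup>* i 0" using Suc by simp
    ultimately show ?case by (rule converse_rtranclp_into_rtranclp)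
  qed
  have "?R\<^sup>*\<^sup>* (L+1) 0" by (rule r_into_rtranclp) (simp add: broom_vertices_def broom_tree_edge)
  moreover have "?R (L+2) (L+1)" "?R (L+3) L" "?R (L+4) L"
    by (simp_all add: broom_vertices_def broom_tree_edge)
  ultimately have pendants: "?R\<^sup>*\<^sup>* (L+2) 0" "?R\<^sup>*\<^sup>* (L+3) 0" "?R\<^sup>*\<^sup>* (L+4) 0"
    using spine[of L] by (auto intro: converse_rtranclp_into_rtranclp)
  have "?R\<^sup>*\<^sup>* v 0" if "v \<in> ?V" for v
    using broom_vertices_cases[OF that] spine pendants \<open>?R\<^sup>*\<^sup>* (L+1) 0\<close> by blast
  then have "connected_on (broom_tree L) ?V"
    by (intro connected_onI[of 0]) (auto simp: broom_vertices_def)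
  then have "connected_on E ?V" using assms(1) by (rule connected_on_mono)
  then show ?thesis
    unfolding connected_graph_def using simple_graph_broom_cycle_subset[OF assms(2)]
    by (simp add: broom_vertices_def)
qed

lemma broom_triangle_remove: "broom_triangle L - {{0, L+2}} = broom_tree L"
proof -
  have "{0, L+2} \<notin> broom_tree L" by (simp only: broom_tree_edge) simp
  then show ?thesis unfolding broom_triangle_def by auto
qed

lemma broom_cycle_remove: "broom_cycle L - {{L+2, L+3}} = broom_triangle L"
proof -
  have "{L+2, L+3} \<notin> broom_triangle L" by (simp only: broom_triangle_edge broom_tree_edge) simp
  then show ?thesis unfolding broom_cycle_def by auto
qed

lemma broom_core_connected:
  assumes "broom_tree L \<subseteq> E"
  shows "connected_on E {L, L+3, L+4}"
proof (rule connected_onI[of L])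
  have "{L+3, L} \<in> E" "{L+4, L} \<in> E" using assms by (auto simp: broom_tree_def insert_commute)
  then show "(\<lambda>x y. x \<in> {L, L+3, L+4} \<and> y \<in> {L, L+3, L+4} \<and> {x, y} \<in> E)\<^sup>*\<^sup>* v L"
    if "v \<in> {L, L+3, L+4}" for v
    using that by (auto intro: r_into_rtranclp)
qed simp

lemma broom_spine_forced:
  assumes "broom_tree L \<subseteq> E" "E \<subseteq> broom_cycle L" "1 \<le> L" "i \<le> L"
  shows "i \<in> zf_closure (broom_vertices L) E {L, L+3, L+4}"
proof (rule zf_closure_path_downward[OF simple_graph_broom_cycle_subset[OF assms(2)] _ _ _ _ assms(4)])
  show "{j, Suc j} \<in> E" if "j < L" for j
    using that assms(1) broom_tree_edge[of j "Suc j" L] by auto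
  show "w = j - 1 \<or> w = Suc j" if "0 < j" "j < L" "{j, w} \<in> E" for j w
    using that assms(2) broom_edge_iffs[of j w L] by auto
  show "L \<in> zf_closure (broom_vertices L) E {L, L+3, L+4}" by (rule zf_closure.init) simp
  show "w \<in> zf_closure (broom_vertices L) E {L, L+3, L+4}" if "{L, w} \<in> E" "w \<noteq> L - 1" for w
  proof -
    have "w = L+3 \<or> w = L+4" using that assms(2,3) broom_edge_iffs[of L w L] by auto
    then show ?thesis by (auto intro: zf_closure.init)
  qed
qed

lemma Zc_broom_le_three:
  assumes "broom_tree L \<subseteq> E" "E \<subseteq> broom_cycle L" "1 \<le> L"
    and "{L+1, L+2} \<subseteq> zf_closure (broom_vertices L) E {L, L+3, L+4}"
  shows "Zc (broom_vertices L) E \<le> 3"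
proof -
  have "broom_vertices L \<subseteq> zf_closure (broom_vertices L) E {L, L+3, L+4}"
    using broom_vertices_cases broom_spine_forced[OF assms(1-3)] assms(4)
    by (blast intro: zf_closure.init)
  then have "Zc (broom_vertices L) E \<le> card {L, L+3, L+4}"
    using Zc_le_card_of_forcing[OF broom_core_connected[OF assms(1)]]
    by (simp add: broom_vertices_def)
  then show ?thesis by simp
qed

lemma Zc_broom_tree_le:
  assumes L: "1 \<le> L"
  shows "Zc (broom_vertices L) (broom_tree L) \<le> 3"
proof (rule Zc_broom_le_three[OF order_refl broom_subsets(3) L])
  let ?C = "zf_closure (broom_vertices L) (broom_tree L) {L, L+3, L+4}"
  note G = simple_graph_broom_cycle_subset[OF broom_subsets(3)]
  have spine: "i \<le> L \<Longrightarrow> i \<in> ?C" for i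
    by (rule broom_spine_forced[OF order_refl broom_subsets(3) L])
  have "L+1 \<in> ?C"
    by (rule zf_closure_force_edge[OF G spine[of 0]]) (use spine L in \<open>auto simp: broom_tree_edge\<close>)
  moreover from this have "L+2 \<in> ?C"
    by (rule zf_closure_force_edge[OF G]) (use spine in \<open>auto simp: broom_tree_edge\<close>)
  ultimately show "{L+1, L+2} \<subseteq> ?C" by simp
qed

lemma Zc_broom_cycle_le:
  assumes L: "1 \<le> L"
  shows "Zc (broom_vertices L) (broom_cycle L) \<le> 3"
proof (rule Zc_broom_le_three[OF broom_subsets(3) order_refl L])
  let ?C = "zf_closure (broom_vertices L) (broom_cycle L) {L, L+3, L+4}"
  note G = simple_graph_broom_cycle_subset[OF order_refl]
  have spine: "i \<le> L \<Longrightarrow> i \<in> ?C" for i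
    by (rule broom_spine_forced[OF broom_subsets(3) order_refl L])
  have "L+3 \<in> ?C" by (rule zf_closure.init) simp
  then have "L+2 \<in> ?C"
    by (rule zf_closure_force_edge[OF G]) (use spine in \<open>auto simp: broom_edge_iffs\<close>)
  moreover from this have "L+1 \<in> ?C"
    by (rule zf_closure_force_edge[OF G])
      (use spine \<open>L+3 \<in> ?C\<close> in \<open>auto simp: broom_edge_iffs\<close>)
  ultimately show "{L+1, L+2} \<subseteq> ?C" by simp
qed

lemma Zc_broom_triangle_ge: "L + 3 \<le> Zc (broom_vertices L) (broom_triangle L)"
proof -
  let ?V = "broom_vertices L" and ?E = "broom_triangle L"
  have "connected_on ?E ?V"
    using connected_graph_broom[OF broom_subsets(1,2)] unfolding connected_graph_def by blast
  then obtain S where S: "connected_forcing_set ?V ?E S" "card S = Zc ?V ?E"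
    by (rule Zc_attained)
  then have zf: "zero_forcing_set ?V ?E S" and conn: "connected_on ?E S"
    unfolding connected_forcing_set_def by auto
  have "fort ?V ?E {L+1, L+2}" "fort ?V ?E {L+3, L+4}"
    unfolding fort_def by (auto simp: broom_vertices_def broom_triangle_edge broom_tree_edge)
  then obtain x y where x: "x \<in> S" "x = L+1 \<or> x = L+2" and y: "y \<in> S" "y = L+3 \<or> y = L+4"
    using zero_forcing_set_meets_fort[OF _ zf] by blast
  \<comment> \<open>every edge leaving \<open>{..<i} \<union> {L+1, L+2}\<close> ends at the spine vertex \<open>i\<close>\<close>
  have "i \<in> S" if "i \<le> L" for i
    by (rule connected_on_contains_gateway[OF conn x(1) y(1), of "{..<i} \<union> {L+1, L+2}"])
      (use x y that in \<open>auto simp: broom_triangle_edge broom_tree_edge\<close>)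
  then have "{..L} \<union> {x, y} \<subseteq> S" using x y by auto
  moreover have "finite S"
    using zf finite_subset unfolding zero_forcing_set_def broom_vertices_def by blast
  ultimately have "card ({..L} \<union> {x, y}) \<le> card S" by (simp add: card_mono)
  moreover have "card ({..L} \<union> {x, y}) = L + 3" using x y by auto
  ultimately show ?thesis using S(2) by simp
qed

lemma non_cut_edge_broom_triangle: "non_cut_edge (broom_vertices L) (broom_triangle L) {0, L+2}"
  unfolding non_cut_edge_def broom_triangle_remove
proof
  show "{0, L+2} \<in> broom_triangle L" by (simp add: broom_triangle_def)
  show "connected_graph (broom_vertices L) (broom_tree L)"
    by (rule connected_graph_broom[OF order_refl broom_subsets(3)])
qed

lemma non_cut_edge_broom_cycle: "non_cut_edge (broom_vertices L) (broom_cycle L) {L+2, L+3}"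
  unfolding non_cut_edge_def broom_cycle_remove
proof
  show "{L+2, L+3} \<in> broom_cycle L" by (simp add: broom_cycle_def)
  show "connected_graph (broom_vertices L) (broom_triangle L)"
    by (rule connected_graph_broom[OF broom_subsets(1,2)])
qed

lemma zc_spread_broom_triangle_ge:
  assumes "1 \<le> L"
  shows "int L \<le> zc_spread (broom_vertices L) (broom_triangle L) {0, L+2}"
  unfolding zc_spread_def broom_triangle_remove
  using Zc_broom_tree_le[OF assms] Zc_broom_triangle_ge[of L] by linarith

lemma zc_spread_broom_cycle_le:
  assumes "1 \<le> L"
  shows "zc_spread (broom_vertices L) (broom_cycle L) {L+2, L+3} \<le> - int L"
  unfolding zc_spread_def broom_cycle_remove
  using Zc_broom_cycle_le[OF assms] Zc_broom_triangle_ge[of L] by linarith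

theorem proposition2:
  fixes c1 c2 :: real
  assumes "c1 < 0" and "c2 > 0"
  shows "\<exists>(V1 :: nat set) E1 e1 (V2 :: nat set) E2 e2.
           connected_graph V1 E1 \<and> non_cut_edge V1 E1 e1 \<and>
           connected_graph V2 E2 \<and> non_cut_edge V2 E2 e2 \<and>
           real_of_int (zc_spread V1 E1 e1) < c1 \<and>
           real_of_int (zc_spread V2 E2 e2) > c2"
proof -
  define L where "L = nat \<lceil>max c2 (- c1)\<rceil> + 1"
  have L: "1 \<le> L" "c2 < real L" "- real L < c1" unfolding L_def by linarith+
  have "real_of_int (zc_spread (broom_vertices L) (broom_cycle L) {L+2, L+3}) < c1"
    using zc_spread_broom_cycle_le[OF L(1)] L(3) by linarith
  moreover have "c2 < real_of_int (zc_spread (broom_vertices L) (broom_triangle L) {0, L+2})"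
    using zc_spread_broom_triangle_ge[OF L(1)] L(2) by linarith
  moreover have "connected_graph (broom_vertices L) (broom_cycle L)"
    "connected_graph (broom_vertices L) (broom_triangle L)"
    using connected_graph_broom[OF broom_subsets(3) order_refl]
      connected_graph_broom[OF broom_subsets(1,2)] .
  ultimately show ?thesis
    using non_cut_edge_broom_cycle non_cut_edge_broom_triangle by blast
qed

end
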